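(* Let $A_{\mathbb{Z}}$ and $d_{\mathbb{Z}}:A_{\mathbb{Z}}\to\mathbb{Z}$ be as in the context, let $\lambda$ be the measure on $[0,1)\times A_{\mathbb{Z}}$ given by $\int f\,d\lambda=\int_0^1\sum_{\omega\in A_{\mathbb{Z}}}f(x,\omega)\,dx$, and define $\mathcal E:L^2(\mathbb{R})\to L^2([0,1)\times A_{\mathbb{Z}},\lambda)$ by $\mathcal Ef(x,\omega)=f(x+d_{\mathbb{Z}}(\omega))$. Then $\mathcal E$ is a unitary isomorphism and it intertwines the representations: $\mathcal E\hat T=\tilde T\mathcal E$ and $\mathcal E\hat U=\tilde U\mathcal E$, where on $L^2(\mathbb{R})$, $\hat Tf(\xi)=e^{2\pi i\xi}f(\xi)$, $\hat Uf(\xi)=\sqrt2 f(2\xi)$, and on $L^2([0,1)\times A_{\mathbb{Z}},\lambda)$, $\tilde Tf(x,\omega)=e^{2\pi ix}f(x,\omega)$, $\tilde Uf(x,\omega)=\sqrt2 f(\tilde r(x,\omega))$.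
   Context: Words: $\underline0=000\cdots$, $\underline1=111\cdots$; $A_0=\{\omega_1\cdots\omega_n\underline0\}$, $A_1=\{\omega_1\cdots\omega_n\underline1\}$ ($n\ge0$, $\omega_i\in\{0,1\}$), $A_{\mathbb{Z}}=A_0\cup A_1$. $d_{\mathbb{Z}}(\omega_1\cdots\omega_n\underline0)=\sum_{k=1}^n\omega_k2^{k-1}$ and $d_{\mathbb{Z}}(\omega_1\cdots\omega_n\underline1)=\sum_{k=1}^n\omega_k2^{k-1}-2^n$ (a bijection $A_{\mathbb{Z}}\to\mathbb{Z}$). On $[0,1)$: $r(x)=2x\bmod1$, $\tau_0(x)=x/2$, $\tau_1(x)=(x+1)/2$, and $\omega_x\in\{0,1\}$ is the digit with $\tau_{\omega_x}(r(x))=x$. $\tilde r(x,\omega_1\omega_2\cdots)=(r(x),\omega_x\omega_1\omega_2\cdots)$. *)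

theory Defs
  imports "HOL-Analysis.Analysis"
begin

text \<open>Words \<omega> = \<omega>_1 \<omega>_2 ... are modelled as sequences nat \<Rightarrow> nat with
  \<omega> 0 playing the role of \<omega>_1 (digits in {0,1}).\<close>

definition A0 :: "(nat \<Rightarrow> nat) set" where
  "A0 = {\<omega>. \<exists>n. (\<forall>k<n. \<omega> k \<in> {0,1}) \<and> (\<forall>k\<ge>n. \<omega> k = 0)}"

definition A1 :: "(nat \<Rightarrow> nat) set" where
  "A1 = {\<omega>. \<exists>n. (\<forall>k<n. \<omega> k \<in> {0,1}) \<and> (\<forall>k\<ge>n. \<omega> k = 1)}"

definition AZ :: "(nat \<Rightarrow> nat) set" where
  "AZ = A0 \<union> A1"

text \<open>d_Z: for \<omega> = \<omega>_1..\<omega>_n 0 0 ... it is \<Sum> \<omega>_k 2^(k-1); for \<omega>_1..\<omega>_n 1 1 ...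
  it is \<Sum> \<omega>_k 2^(k-1) - 2^n. (Independent of the chosen n; we use the least one.)\<close>
definition dZ :: "(nat \<Rightarrow> nat) \<Rightarrow> int" where
  "dZ \<omega> =
    (if \<omega> \<in> A0 then
       (let n = (LEAST n. \<forall>k\<ge>n. \<omega> k = 0) in (\<Sum>k<n. int (\<omega> k) * 2 ^ k))
     else
       (let n = (LEAST n. \<forall>k\<ge>n. \<omega> k = 1) in (\<Sum>k<n. int (\<omega> k) * 2 ^ k) - 2 ^ n))"

definition r :: "real \<Rightarrow> real" where
  "r x = frac (2 * x)"

definition tau :: "nat \<Rightarrow> real \<Rightarrow> real" where
  "tau w x = (x + real w) / 2"

definition digit :: "real \<Rightarrow> nat" where
  "digit x = (THE w. w \<in> {0,1} \<and> tau w (r x) = x)"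

definition rtilde :: "real \<times> (nat \<Rightarrow> nat) \<Rightarrow> real \<times> (nat \<Rightarrow> nat)" where
  "rtilde p = (r (fst p), case_nat (digit (fst p)) (snd p))"

definition lam :: "(real \<times> (nat \<Rightarrow> nat)) measure" where
  "lam = restrict_space lborel {0..<1} \<Otimes>\<^sub>M count_space AZ"

definition square_integrable :: "'a measure \<Rightarrow> ('a \<Rightarrow> complex) \<Rightarrow> bool" where
  "square_integrable M f \<longleftrightarrow> f \<in> borel_measurable M \<and> integrable M (\<lambda>x. (cmod (f x))^2)"

definition L2norm_sq :: "'a measure \<Rightarrow> ('a \<Rightarrow> complex) \<Rightarrow> real" where
  "L2norm_sq M f = (\<integral>x. (cmod (f x))^2 \<partial>M)"

definition E :: "(real \<Rightarrow> complex) \<Rightarrow> real \<times> (nat \<Rightarrow> nat) \<Rightarrow> complex" where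
  "E f p = f (fst p + of_int (dZ (snd p)))"

definition That :: "(real \<Rightarrow> complex) \<Rightarrow> real \<Rightarrow> complex" where
  "That f \<xi> = exp (2 * pi * \<i> * of_real \<xi>) * f \<xi>"

definition Uhat :: "(real \<Rightarrow> complex) \<Rightarrow> real \<Rightarrow> complex" where
  "Uhat f \<xi> = of_real (sqrt 2) * f (2 * \<xi>)"

definition Ttilde :: "(real \<times> (nat \<Rightarrow> nat) \<Rightarrow> complex) \<Rightarrow> real \<times> (nat \<Rightarrow> nat) \<Rightarrow> complex" where
  "Ttilde g p = exp (2 * pi * \<i> * of_real (fst p)) * g p"

definition Utilde :: "(real \<times> (nat \<Rightarrow> nat) \<Rightarrow> complex) \<Rightarrow> real \<times> (nat \<Rightarrow> nat) \<Rightarrow> complex" where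
  "Utilde g p = of_real (sqrt 2) * g (rtilde p)"

end

theory Submission
  imports Defs
begin

text \<open>The map \<open>(x, \<omega>) \<mapsto> x + d\<^sub>\<int>(\<omega>)\<close> is a bijection \<open>[0,1) \<times> A\<^sub>\<int> \<rightarrow> \<real>\<close>: \<open>d\<^sub>\<int>\<close> is a
  bijection onto \<open>\<int>\<close> (its inverse reads off the two's complement binary digits of an integer)
  and the translates \<open>[n, n+1)\<close> tile \<open>\<real>\<close>. It carries \<open>\<lambda>\<close> to Lebesgue measure, so \<open>\<E>\<close>, which
  is composition with this map, is a unitary isomorphism. It intertwines \<open>T\<close> because
  \<open>exp (2\<pi>in) = 1\<close> for integers \<open>n\<close>, and \<open>U\<close> because prepending the digit \<open>\<omega>\<^sub>x\<close> to \<open>\<omega>\<close> gives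
  \<open>r(x) + d\<^sub>\<int>(\<omega>\<^sub>x \<omega>) = 2 (x + d\<^sub>\<int>(\<omega>))\<close>.\<close>

definition words_ending :: "nat \<Rightarrow> (nat \<Rightarrow> nat) set" where
  "words_ending c = {\<omega>. \<exists>n. (\<forall>k<n. \<omega> k \<in> {0,1}) \<and> (\<forall>k\<ge>n. \<omega> k = c)}"

lemma A0_eq_words_ending: "A0 = words_ending 0"
  by (simp add: A0_def words_ending_def)

lemma A1_eq_words_ending: "A1 = words_ending 1"
  by (simp add: A1_def words_ending_def)

lemma words_ending_disjoint:
  assumes "\<omega> \<in> words_ending c" "\<omega> \<in> words_ending c'"
  shows "c = c'"
proof -
  obtain n n' where "\<forall>k\<ge>n. \<omega> k = c" "\<forall>k\<ge>n'. \<omega> k = c'"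
    using assms unfolding words_ending_def by blast
  then show ?thesis by (metis max.cobounded1 max.cobounded2)
qed

lemma words_ending_digit:
  assumes "\<omega> \<in> words_ending c" "c \<in> {0,1}"
  shows "\<omega> k \<in> {0,1}"
proof -
  obtain n where "\<forall>k<n. \<omega> k \<in> {0,1}" "\<forall>k\<ge>n. \<omega> k = c"
    using assms(1) unfolding words_ending_def by blast
  then show ?thesis using assms(2) by (cases "k < n") auto
qed

lemma case_nat_in_words_ending_iff:
  assumes "d \<in> {0,1}"
  shows "case_nat d \<omega> \<in> words_ending c \<longleftrightarrow> \<omega> \<in> words_ending c"
proof
  assume "case_nat d \<omega> \<in> words_ending c"
  then obtain n where digits: "\<forall>k<n. case_nat d \<omega> k \<in> {0,1}"
    and tail: "\<forall>k\<ge>n. case_nat d \<omega> k = c"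
    unfolding words_ending_def by blast
  have "(\<forall>k<n-1. \<omega> k \<in> {0,1}) \<and> (\<forall>k\<ge>n-1. \<omega> k = c)"
  proof (intro conjI allI impI)
    fix k assume "k < n - 1"
    then show "\<omega> k \<in> {0,1}" using digits[rule_format, of "Suc k"] by simp
  next
    fix k assume "n - 1 \<le> k"
    then show "\<omega> k = c" using tail[rule_format, of "Suc k"] by simp
  qed
  then show "\<omega> \<in> words_ending c" unfolding words_ending_def by blast
next
  assume "\<omega> \<in> words_ending c"
  then obtain n where "\<forall>k<n. \<omega> k \<in> {0,1}" "\<forall>k\<ge>n. \<omega> k = c"
    unfolding words_ending_def by blast
  then have "(\<forall>k<Suc n. case_nat d \<omega> k \<in> {0,1}) \<and> (\<forall>k\<ge>Suc n. case_nat d \<omega> k = c)"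
    using assms by (auto split: nat.splits)
  then show "case_nat d \<omega> \<in> words_ending c" unfolding words_ending_def by blast
qed

lemma case_nat_in_AZ_iff: "d \<in> {0,1} \<Longrightarrow> case_nat d \<omega> \<in> AZ \<longleftrightarrow> \<omega> \<in> AZ"
  by (simp add: AZ_def A0_eq_words_ending A1_eq_words_ending case_nat_in_words_ending_iff)

lemma dZ_A0:
  assumes "\<omega> \<in> A0" "\<forall>k\<ge>n. \<omega> k = 0"
  shows "dZ \<omega> = (\<Sum>k<n. int (\<omega> k) * 2 ^ k)"
proof -
  define n0 where "n0 = (LEAST n. \<forall>k\<ge>n. \<omega> k = 0)"
  have "n0 \<le> n" unfolding n0_def by (rule Least_le) (use assms in auto)
  moreover have "\<forall>k\<ge>n0. \<omega> k = 0" unfolding n0_def by (rule LeastI) (use assms in auto)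
  ultimately have "(\<Sum>k<n. int (\<omega> k) * 2 ^ k) = (\<Sum>k<n0. int (\<omega> k) * 2 ^ k)"
    by (intro sum.mono_neutral_right) auto
  then show ?thesis unfolding dZ_def n0_def using assms by simp
qed

lemma A0_A1_disjoint: "A0 \<inter> A1 = {}"
  using words_ending_disjoint by (fastforce simp: A0_eq_words_ending A1_eq_words_ending)

lemma dZ_A1:
  assumes "\<omega> \<in> A1" "\<forall>k\<ge>n. \<omega> k = 1"
  shows "dZ \<omega> = (\<Sum>k<n. int (\<omega> k) * 2 ^ k) - 2 ^ n"
proof -
  define n0 where "n0 = (LEAST n. \<forall>k\<ge>n. \<omega> k = 1)"
  have le: "n0 \<le> n" unfolding n0_def by (rule Least_le) (use assms in auto)
  have ones: "\<forall>k\<ge>n0. \<omega> k = 1" unfolding n0_def by (rule LeastI) (use assms in auto)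
  have "(\<Sum>k<m. int (\<omega> k) * 2 ^ k) - 2 ^ m = (\<Sum>k<n0. int (\<omega> k) * 2 ^ k) - 2 ^ n0"
    if "n0 \<le> m" for m
    using that
  proof (induction m rule: dec_induct)
    case (step m)
    then show ?case using ones by simp
  qed simp
  from this[OF le] show ?thesis
    using assms(1) A0_A1_disjoint unfolding dZ_def n0_def by (auto simp: Let_def)
qed

lemma dZ_case_nat:
  assumes d: "d \<in> {0,1}" and \<omega>: "\<omega> \<in> AZ"
  shows "dZ (case_nat d \<omega>) = int d + 2 * dZ \<omega>"
proof -
  have shift: "(\<Sum>k<Suc n. int (case_nat d \<omega> k) * 2 ^ k) = int d + 2 * (\<Sum>k<n. int (\<omega> k) * 2 ^ k)"
    for n by (subst sum.lessThan_Suc_shift) (simp add: sum_distrib_left mult.left_commute)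
  show ?thesis
  proof (cases "\<omega> \<in> A0")
    case True
    then obtain n where zeros: "\<forall>k\<ge>n. \<omega> k = 0" unfolding A0_def by blast
    then have "\<forall>k\<ge>Suc n. case_nat d \<omega> k = 0" by (auto split: nat.splits)
    moreover have "case_nat d \<omega> \<in> A0"
      using True d by (simp add: A0_eq_words_ending case_nat_in_words_ending_iff)
    ultimately show ?thesis using dZ_A0[OF True zeros] dZ_A0[of "case_nat d \<omega>" "Suc n"] shift by simp
  next
    case False
    then have A1: "\<omega> \<in> A1" using \<omega> unfolding AZ_def by blast
    then obtain n where ones: "\<forall>k\<ge>n. \<omega> k = 1" unfolding A1_def by blast
    then have "\<forall>k\<ge>Suc n. case_nat d \<omega> k = 1" by (auto split: nat.splits)
    moreover have "case_nat d \<omega> \<in> A1"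
      using A1 d by (simp add: A1_eq_words_ending case_nat_in_words_ending_iff)
    ultimately show ?thesis using dZ_A1[OF A1 ones] dZ_A1[of "case_nat d \<omega>" "Suc n"] shift by simp
  qed
qed

definition binary_digits :: "int \<Rightarrow> nat \<Rightarrow> nat" where
  "binary_digits m k = nat ((m div 2 ^ k) mod 2)"

lemma binary_digits_rec: "binary_digits m = case_nat (nat (m mod 2)) (binary_digits (m div 2))"
proof
  fix k show "binary_digits m k = case_nat (nat (m mod 2)) (binary_digits (m div 2)) k"
    by (cases k) (simp_all add: binary_digits_def zdiv_zmult2_eq)
qed

lemma binary_digits_cons:
  "d \<in> {0,1} \<Longrightarrow> binary_digits (int d + 2 * m) = case_nat d (binary_digits m)"
  by (subst binary_digits_rec) auto

lemma binary_digits_0: "binary_digits 0 = (\<lambda>_. 0)"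
  by (simp add: binary_digits_def fun_eq_iff)

lemma binary_digits_minus_1: "binary_digits (-1) = (\<lambda>_. 1)"
  by (simp add: binary_digits_def fun_eq_iff div_eq_minus1)

lemma binary_digits_in_AZ_dZ: "binary_digits m \<in> AZ \<and> dZ (binary_digits m) = m"
proof (induction "nat \<bar>m\<bar>" arbitrary: m rule: less_induct)
  case less
  consider "m = 0" | "m = -1" | "m \<noteq> 0" "m \<noteq> -1" by blast
  then show ?case
  proof cases
    case 1
    then have "binary_digits m \<in> A0" by (simp add: binary_digits_0 A0_def)
    then show ?thesis using dZ_A0[of _ 0] 1 by (simp add: AZ_def binary_digits_0)
  next
    case 2
    then have "binary_digits m \<in> A1" by (simp add: binary_digits_minus_1 A1_def)
    then show ?thesis using dZ_A1[of _ 0] 2 by (simp add: AZ_def binary_digits_minus_1)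
  next
    case 3
    then have "nat \<bar>m div 2\<bar> < nat \<bar>m\<bar>" by auto
    from less[OF this] have IH: "binary_digits (m div 2) \<in> AZ" "dZ (binary_digits (m div 2)) = m div 2"
      by auto
    have d: "nat (m mod 2) \<in> {0,1}" by auto
    show ?thesis
      using binary_digits_rec[of m] case_nat_in_AZ_iff[OF d] dZ_case_nat[OF d IH(1)] IH by simp
  qed
qed

lemma binary_digits_dZ:
  assumes "\<omega> \<in> AZ"
  shows "binary_digits (dZ \<omega>) = \<omega>"
proof -
  obtain c where c: "c \<in> {0,1}" "\<omega> \<in> words_ending c"
    using assms unfolding AZ_def A0_eq_words_ending A1_eq_words_ending by blast
  then obtain n where "\<forall>k\<ge>n. \<omega> k = c" unfolding words_ending_def by blast
  with c show ?thesis
  proof (induction n arbitrary: \<omega>)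
    case 0
    then have \<omega>: "\<omega> = (\<lambda>_. c)" by auto
    from 0 consider "c = 0" | "c = 1" by blast
    then show ?case
    proof cases
      case 1
      then have "\<omega> \<in> A0" using 0(2) by (simp add: A0_eq_words_ending)
      then show ?thesis using dZ_A0[of \<omega> 0] by (simp add: \<omega> 1 binary_digits_0)
    next
      case 2
      then have "\<omega> \<in> A1" using 0(2) by (simp add: A1_eq_words_ending)
      then show ?thesis using dZ_A1[of \<omega> 0] by (simp add: \<omega> 2 binary_digits_minus_1)
    qed
  next
    case (Suc n)
    define d where "d = \<omega> 0"
    define t where "t k = \<omega> (Suc k)" for k
    have \<omega>: "\<omega> = case_nat d t" by (simp add: fun_eq_iff d_def t_def split: nat.split)
    have d: "d \<in> {0,1}" unfolding d_def using words_ending_digit Suc.prems by blast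
    have t: "t \<in> words_ending c"
      using Suc.prems(2) case_nat_in_words_ending_iff[OF d] unfolding \<omega> by blast
    have "\<forall>k\<ge>n. t k = c" using Suc.prems(3) by (simp add: t_def)
    then have "binary_digits (dZ t) = t" using Suc.IH[OF Suc.prems(1) t] by blast
    moreover have "t \<in> AZ"
      using t Suc.prems(1) unfolding AZ_def A0_eq_words_ending A1_eq_words_ending by blast
    ultimately show ?case unfolding \<omega> by (simp add: dZ_case_nat[OF d] binary_digits_cons[OF d])
  qed
qed

lemma bij_betw_dZ: "bij_betw dZ AZ UNIV"
  by (rule bij_betw_byWitness[where f'=binary_digits]) (use binary_digits_dZ binary_digits_in_AZ_dZ in auto)

lemma countable_AZ: "countable AZ"
proof -
  have "AZ = range binary_digits"
    using binary_digits_dZ binary_digits_in_AZ_dZ by (metis image_subset_iff rangeI subsetI subset_antisym)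
  moreover have "countable (range binary_digits)" by (rule countable_image) simp
  ultimately show ?thesis by simp
qed

definition position :: "real \<times> (nat \<Rightarrow> nat) \<Rightarrow> real" where
  "position p = fst p + of_int (dZ (snd p))"

definition position_inv :: "real \<Rightarrow> real \<times> (nat \<Rightarrow> nat)" where
  "position_inv t = (frac t, binary_digits \<lfloor>t\<rfloor>)"

lemma E_eq_position: "E f p = f (position p)"
  by (simp add: E_def position_def)

lemma position_inv_position:
  assumes "p \<in> {0..<1} \<times> AZ"
  shows "position_inv (position p) = p"
proof -
  obtain x \<omega> where p: "p = (x, \<omega>)" "0 \<le> x" "x < 1" "\<omega> \<in> AZ" using assms by auto
  have "frac (x + of_int (dZ \<omega>)) = x" using p by (simp add: frac_eq)
  moreover have "\<lfloor>x + of_int (dZ \<omega>)\<rfloor> = dZ \<omega>" using p by (simp add: floor_eq_iff)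
  ultimately show ?thesis using p binary_digits_dZ by (simp add: position_def position_inv_def)
qed

lemma digit_eq_floor:
  assumes "0 \<le> x" "x < 1"
  shows "digit x \<in> {0,1}" and "real (digit x) = of_int \<lfloor>2 * x\<rfloor>"
proof -
  have floor: "\<lfloor>2 * x\<rfloor> \<in> {0,1}" using assms by (auto simp: floor_eq_iff)
  have "nat k \<in> {0,1} \<and> real (nat k) = of_int k" if "k \<in> {0,1}" for k :: int
    using that by auto
  from this[OF floor] have nat_floor:
    "nat \<lfloor>2 * x\<rfloor> \<in> {0,1}" "real (nat \<lfloor>2 * x\<rfloor>) = of_int \<lfloor>2 * x\<rfloor>"
    by auto
  have "digit x = nat \<lfloor>2 * x\<rfloor>"
    unfolding digit_def
  proof (rule the_equality)
    show "nat \<lfloor>2 * x\<rfloor> \<in> {0,1} \<and> tau (nat \<lfloor>2 * x\<rfloor>) (r x) = x"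
      using nat_floor by (simp add: tau_def r_def frac_def)
  next
    fix w assume "w \<in> {0,1} \<and> tau w (r x) = x"
    then have "real w = of_int \<lfloor>2 * x\<rfloor>" by (simp add: tau_def r_def frac_def field_simps)
    then show "w = nat \<lfloor>2 * x\<rfloor>" by linarith
  qed
  with nat_floor show "digit x \<in> {0,1}" "real (digit x) = of_int \<lfloor>2 * x\<rfloor>" by simp_all
qed

lemma position_rtilde:
  assumes "0 \<le> x" "x < 1" "\<omega> \<in> AZ"
  shows "position (rtilde (x, \<omega>)) = 2 * position (x, \<omega>)"
  using dZ_case_nat[OF digit_eq_floor(1)[OF assms(1,2)] assms(3)] digit_eq_floor(2)[OF assms(1,2)]
  by (simp add: position_def rtilde_def r_def frac_def)

lemma space_lam: "space lam = {0..<1} \<times> AZ"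
  unfolding lam_def by (simp add: space_pair_measure space_restrict_space)

lemma position_measurable: "position \<in> borel_measurable lam"
  unfolding lam_def position_def[abs_def]
proof (rule borel_measurable_add)
  have "(\<lambda>x::real. x) \<in> borel_measurable (restrict_space lborel {0..<1})"
    by (rule measurable_restrict_space1) simp
  then show "(\<lambda>p. fst p) \<in> borel_measurable (restrict_space lborel {0..<1::real} \<Otimes>\<^sub>M count_space AZ)"
    by (rule measurable_compose[OF measurable_fst])
  show "(\<lambda>p. real_of_int (dZ (snd p))) \<in> borel_measurable (restrict_space lborel {0..<1::real} \<Otimes>\<^sub>M count_space AZ)"
    by (rule measurable_compose[OF measurable_snd]) simp
qed

lemma position_inv_measurable: "position_inv \<in> measurable borel lam"
  unfolding lam_def position_inv_def
proof (rule measurable_Pair)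
  have "(frac :: real \<Rightarrow> real) \<in> borel_measurable borel"
    unfolding frac_def[abs_def] by measurable
  then show "(frac :: real \<Rightarrow> real) \<in> measurable borel (restrict_space lborel {0..<1})"
    by (intro measurable_restrict_space2) (auto simp: frac_lt_1)
  have "binary_digits \<in> measurable (count_space UNIV) (count_space AZ)"
    using binary_digits_in_AZ_dZ by simp
  then show "(\<lambda>t::real. binary_digits \<lfloor>t\<rfloor>) \<in> measurable borel (count_space AZ)"
    by (rule measurable_compose[OF measurable_real_floor])
qed

lemma nn_integral_translate_unit_interval:
  fixes h :: "real \<Rightarrow> ennreal" and n :: int
  assumes [measurable]: "h \<in> borel_measurable borel"
  shows "(\<integral>\<^sup>+x. h (x + of_int n) * indicator {0..<1} x \<partial>lborel)
    = (\<integral>\<^sup>+t. h t * indicator {of_int n..<of_int n + 1} t \<partial>lborel)"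
proof -
  have "(\<integral>\<^sup>+t. h t * indicator {of_int n..<of_int n + 1} t \<partial>lborel)
      = (\<integral>\<^sup>+x. h (of_int n + x) * indicator {of_int n..<of_int n + 1} (of_int n + x) \<partial>lborel)"
    using nn_integral_real_affine[of "\<lambda>t. h t * indicator {of_int n..<of_int n + 1} t" 1 "of_int n"]
    by simp
  also have "\<dots> = (\<integral>\<^sup>+x. h (x + n) * indicator {0..<1} x \<partial>lborel)"
    by (rule nn_integral_cong) (simp add: indicator_def add.commute)
  finally show ?thesis by simp
qed

lemma nn_integral_unit_interval_translates:
  fixes h :: "real \<Rightarrow> ennreal"
  assumes [measurable]: "h \<in> borel_measurable borel"
  shows "(\<integral>\<^sup>+x. \<integral>\<^sup>+n. h (x + of_int n) \<partial>count_space UNIV \<partial>restrict_space lborel {0..<1})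
    = (\<integral>\<^sup>+t. h t \<partial>lborel)"
proof -
  let ?Z = "count_space (UNIV :: int set)"
  interpret pair_sigma_finite lborel ?Z
    by (simp add: pair_sigma_finite_def sigma_finite_lborel sigma_finite_measure_count_space_countable)
  have "(\<integral>\<^sup>+x. \<integral>\<^sup>+n. h (x + of_int n) \<partial>?Z \<partial>restrict_space lborel {0..<1})
      = (\<integral>\<^sup>+x. (\<integral>\<^sup>+n. h (x + of_int n) \<partial>?Z) * indicator {0..<1} x \<partial>lborel)"
    by (rule nn_integral_restrict_space) simp
  also have "\<dots> = (\<integral>\<^sup>+x. \<integral>\<^sup>+n. h (x + of_int n) * indicator {0..<1} x \<partial>?Z \<partial>lborel)"
    by (intro nn_integral_cong nn_integral_multc[symmetric]) simp
  also have "\<dots> = (\<integral>\<^sup>+n. \<integral>\<^sup>+x. h (x + of_int n) * indicator {0..<1} x \<partial>lborel \<partial>?Z)"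
    by (rule Fubini[symmetric, where f="\<lambda>(x,n). h (x + of_int n) * indicator {0..<1} x", simplified])
       measurable
  also have "\<dots> = (\<integral>\<^sup>+n. \<integral>\<^sup>+t. h t * indicator {of_int n..<of_int n + 1} t \<partial>lborel \<partial>?Z)"
    by (rule nn_integral_cong, rule nn_integral_translate_unit_interval) simp
  also have "\<dots> = (\<integral>\<^sup>+t. \<integral>\<^sup>+n. h t * indicator {of_int n..<of_int n + 1} t \<partial>?Z \<partial>lborel)"
    by (rule Fubini[where f="\<lambda>(t,n). h t * indicator {of_int n..<of_int n + 1} t", simplified])
       measurable
  also have "\<dots> = (\<integral>\<^sup>+t. h t \<partial>lborel)"
  proof (rule nn_integral_cong)
    fix t :: real
    have "(\<integral>\<^sup>+n. h t * indicator {of_int n..<of_int n + 1} t \<partial>?Z) = (\<integral>\<^sup>+n. h t * indicator {\<lfloor>t\<rfloor>} n \<partial>?Z)"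
      by (rule nn_integral_cong) (auto simp: indicator_def floor_eq_iff dest: floor_unique)
    then show "(\<integral>\<^sup>+n. h t * indicator {of_int n..<of_int n + 1} t \<partial>?Z) = h t" by simp
  qed
  finally show ?thesis .
qed

lemma nn_integral_lam_position:
  fixes h :: "real \<Rightarrow> ennreal"
  assumes [measurable]: "h \<in> borel_measurable borel"
  shows "(\<integral>\<^sup>+p. h (position p) \<partial>lam) = (\<integral>\<^sup>+t. h t \<partial>lborel)"
proof -
  have "(\<lambda>p. h (position p)) \<in> borel_measurable (restrict_space lborel {0..<1} \<Otimes>\<^sub>M count_space AZ)"
    using measurable_compose[OF position_measurable assms] unfolding lam_def .
  then have "(\<integral>\<^sup>+p. h (position p) \<partial>lam)
      = (\<integral>\<^sup>+x. \<integral>\<^sup>+\<omega>. h (x + of_int (dZ \<omega>)) \<partial>count_space AZ \<partial>restrict_space lborel {0..<1})"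
    unfolding lam_def position_def
    by (simp add: sigma_finite_measure.nn_integral_fst[symmetric]
        sigma_finite_measure_count_space_countable countable_AZ)
  also have "\<dots> = (\<integral>\<^sup>+x. \<integral>\<^sup>+n. h (x + of_int n) \<partial>count_space UNIV \<partial>restrict_space lborel {0..<1})"
    by (intro nn_integral_cong nn_integral_bij_count_space[OF bij_betw_dZ])
  finally show ?thesis by (simp add: nn_integral_unit_interval_translates)
qed

lemma square_integrable_iff_nn_integral:
  "square_integrable M u \<longleftrightarrow>
    u \<in> borel_measurable M \<and> (\<integral>\<^sup>+x. ennreal ((cmod (u x))\<^sup>2) \<partial>M) < \<infinity>"
  unfolding square_integrable_def by (auto simp: integrable_iff_bounded)

lemma L2norm_sq_eq_nn_integral:
  "u \<in> borel_measurable M \<Longrightarrow> L2norm_sq M u = enn2real (\<integral>\<^sup>+x. ennreal ((cmod (u x))\<^sup>2) \<partial>M)"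
  unfolding L2norm_sq_def by (intro integral_eq_nn_integral) auto

lemma E_linear: "E (\<lambda>t. a * f t + b * g t) = (\<lambda>p. a * E f p + b * E g p)"
  by (simp add: E_def fun_eq_iff)

lemma E_measurable: "f \<in> borel_measurable borel \<Longrightarrow> E f \<in> borel_measurable lam"
  unfolding E_eq_position[abs_def] by (rule measurable_compose[OF position_measurable])

lemma nn_integral_norm_E:
  "f \<in> borel_measurable borel \<Longrightarrow>
    (\<integral>\<^sup>+p. ennreal ((cmod (E f p))\<^sup>2) \<partial>lam) = (\<integral>\<^sup>+t. ennreal ((cmod (f t))\<^sup>2) \<partial>lborel)"
  unfolding E_eq_position by (rule nn_integral_lam_position) measurable

lemma E_isometry:
  assumes "square_integrable lborel f"
  shows "square_integrable lam (E f)" and "L2norm_sq lam (E f) = L2norm_sq lborel f"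
proof -
  have f: "f \<in> borel_measurable borel" using assms unfolding square_integrable_def by simp
  show "square_integrable lam (E f)"
    using assms E_measurable[OF f] nn_integral_norm_E[OF f]
    by (simp add: square_integrable_iff_nn_integral)
  show "L2norm_sq lam (E f) = L2norm_sq lborel f"
    using E_measurable[OF f] f nn_integral_norm_E[OF f] by (simp add: L2norm_sq_eq_nn_integral)
qed

lemma E_surjective:
  assumes "square_integrable lam g"
  shows "square_integrable lborel (g \<circ> position_inv)" and "\<forall>p\<in>space lam. E (g \<circ> position_inv) p = g p"
proof -
  have "g \<in> borel_measurable lam" using assms unfolding square_integrable_def by simp
  then have meas: "g \<circ> position_inv \<in> borel_measurable borel"
    by (rule measurable_comp[OF position_inv_measurable])
  show "\<forall>p\<in>space lam. E (g \<circ> position_inv) p = g p"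
    by (simp add: E_eq_position position_inv_position space_lam)
  then have "(\<integral>\<^sup>+p. ennreal ((cmod (E (g \<circ> position_inv) p))\<^sup>2) \<partial>lam)
      = (\<integral>\<^sup>+p. ennreal ((cmod (g p))\<^sup>2) \<partial>lam)"
    by (intro nn_integral_cong) simp
  then show "square_integrable lborel (g \<circ> position_inv)"
    using assms meas nn_integral_norm_E[OF meas] by (simp add: square_integrable_iff_nn_integral)
qed

lemma E_That: "E (That f) = Ttilde (E f)"
proof
  fix p :: "real \<times> (nat \<Rightarrow> nat)"
  obtain x \<omega> where p: "p = (x, \<omega>)" by (cases p)
  have "exp (2 * pi * \<i> * complex_of_real (x + of_int (dZ \<omega>)))
      = exp (2 * pi * \<i> * complex_of_real x) * exp (2 * of_int (dZ \<omega>) * pi * \<i>)"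
    by (simp add: exp_add[symmetric] algebra_simps)
  also have "exp (2 * of_int (dZ \<omega>) * pi * \<i>) = 1" by (rule exp_integer_2pi) simp
  finally show "E (That f) p = Ttilde (E f) p"
    by (simp add: p E_def That_def Ttilde_def)
qed

lemma E_Uhat:
  assumes "p \<in> space lam"
  shows "E (Uhat f) p = Utilde (E f) p"
proof -
  obtain x \<omega> where p: "p = (x, \<omega>)" "0 \<le> x" "x < 1" "\<omega> \<in> AZ"
    using assms unfolding space_lam by auto
  show ?thesis
    using position_rtilde[OF p(2-4)] by (simp add: p E_eq_position Uhat_def Utilde_def)
qed

theorem proposition3p13:
  shows "(\<forall>f g a b. E (\<lambda>t. a * f t + b * g t) = (\<lambda>p. a * E f p + b * E g p))
    \<and> (\<forall>f. square_integrable lborel f \<longrightarrow>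
          square_integrable lam (E f) \<and> L2norm_sq lam (E f) = L2norm_sq lborel f)
    \<and> (\<forall>g. square_integrable lam g \<longrightarrow>
          (\<exists>f. square_integrable lborel f \<and> (AE p in lam. E f p = g p)))
    \<and> (\<forall>f. square_integrable lborel f \<longrightarrow> (AE p in lam. E (That f) p = Ttilde (E f) p))
    \<and> (\<forall>f. square_integrable lborel f \<longrightarrow> (AE p in lam. E (Uhat f) p = Utilde (E f) p))"
proof (intro conjI allI impI)
  fix g assume "square_integrable lam g"
  with E_surjective show "\<exists>f. square_integrable lborel f \<and> (AE p in lam. E f p = g p)"
    by (blast intro: AE_I2)
qed (simp_all add: E_linear E_isometry E_That E_Uhat AE_I2)

end
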